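(* Let $R$ be a commutative $k$-algebra with system of coordinates $(x_1,\ldots,x_n)$, $M=x_1R+\cdots+x_nR$, $R/M=k$, and assume $R$ is $M$-adically complete. Let $1\le m\le n$ and let $\hat D_m$, $\hat D_{m,n-m}$, $\hat E_{m,n-m}$ and the right action of $\hat E_{m,n-m}$ on $W_{m,n-m}=k[z_1^{-1},\ldots,z_m^{-1}]((z_{m+1}))\ldots((z_n))$ be as in the context. Then with $W_0=k[z_1^{-1},\ldots,z_n^{-1}]\subset W_{m,n-m}$, $$\hat D_{m,n-m}=\{A\in\hat E_{m,n-m}\;:\;W_0A\subseteq W_0\}.$$
   Context: $k$ is a field of characteristic zero. A system of coordinates of $R$ is a tuple $(x_1,\ldots,x_n)\in R^n$ such that $\mathrm{Der}_k(R)\to R^n$, $\delta\mapsto(\delta(x_i))_i$ is bijective and the common kernel of all derivations is $k$; $\partial_1,\ldots,\partial_n$ are the commuting derivations with $\partial_i(x_j)=\delta_{ij}$ (continuous derivations if $R$ is complete). $\hat D_m$ is the set of formal series $\sum_{\mathbf i\in\mathbb N^m}p_{\mathbf i}\partial_1^{i_1}\cdots\partial_m^{i_m}$, $p_{\mathbf i}\in R$, such that $p_{\mathbf i}\to0$ in the $M$-adic topology as $i_1+\cdots+i_m\to\infty$; it is an associative ring with multiplication given by the Leibniz rule. $\hat D_{m,n-m}=\hat D_m[\partial_{m+1},\ldots,\partial_n]$ and $\hat E_{m,n-m}=\hat D_m((\partial_{m+1}^{-1}))\ldots((\partial_n^{-1}))$ (iterated formal Laurent series in $\partial_j^{-1}$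 with coefficients written on the left, multiplication by the Leibniz rule $\partial^{i}a=\sum_{l\ge0}\binom{i}{l}\partial^l(a)\partial^{i-l}$, $\binom{i}{l}=i(i-1)\cdots(i-l+1)/l!$). The right action of $\hat E_{m,n-m}$ on $W_{m,n-m}$ comes from the identification $\hat E_{m,n-m}/M\hat E_{m,n-m}\simeq W_{m,n-m}$ sending the class of $p\,\partial_1^{i_1}\cdots\partial_n^{i_n}$ ($p\in R$) to $p(0)z_1^{-i_1}\cdots z_n^{-i_n}$, $p(0)$ the image of $p$ in $R/M=k$. *)

theory Defs
  imports Main
begin

text \<open>The field k is a type 'k of class field_char_0, the commutative
 ring R is a type 'r of class comm_ring_1, and the k-algebra structure is the ring
 homomorphism iota :: 'k => 'r.  Coordinates are x 0, ..., x (n-1) (0-based).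
 Multi-indices (exponents of the operators d_0, ..., d_(n-1)) are functions
 nat => int that vanish outside {0..<n}.\<close>

definition k_algebra_hom :: "('k::field \<Rightarrow> 'r::comm_ring_1) \<Rightarrow> bool" where
  "k_algebra_hom \<iota> \<longleftrightarrow> \<iota> 1 = 1 \<and> (\<forall>a b. \<iota> (a + b) = \<iota> a + \<iota> b) \<and> (\<forall>a b. \<iota> (a * b) = \<iota> a * \<iota> b)"

definition is_der :: "('k::field \<Rightarrow> 'r::comm_ring_1) \<Rightarrow> ('r \<Rightarrow> 'r) \<Rightarrow> bool" where
  "is_der \<iota> \<delta> \<longleftrightarrow> (\<forall>a b. \<delta> (a + b) = \<delta> a + \<delta> b) \<and> (\<forall>a b. \<delta> (a * b) = a * \<delta> b + b * \<delta> a)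
      \<and> (\<forall>c a. \<delta> (\<iota> c * a) = \<iota> c * \<delta> a)"

definition coord_system :: "('k::field \<Rightarrow> 'r::comm_ring_1) \<Rightarrow> nat \<Rightarrow> (nat \<Rightarrow> 'r) \<Rightarrow> bool" where
  "coord_system \<iota> n x \<longleftrightarrow>
     (\<forall>v :: nat \<Rightarrow> 'r. \<exists>!\<delta>. is_der \<iota> \<delta> \<and> (\<forall>i<n. \<delta> (x i) = v i))
     \<and> {a. \<forall>\<delta>. is_der \<iota> \<delta> \<longrightarrow> \<delta> a = 0} = range \<iota>"

definition monomials_deg :: "nat \<Rightarrow> nat \<Rightarrow> (nat \<Rightarrow> nat) set" where
  "monomials_deg n N = {\<alpha>. (\<forall>i\<ge>n. \<alpha> i = 0) \<and> sum \<alpha> {..<n} = N}"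

definition xpow :: "nat \<Rightarrow> (nat \<Rightarrow> 'r::comm_ring_1) \<Rightarrow> (nat \<Rightarrow> nat) \<Rightarrow> 'r" where
  "xpow n x \<alpha> = (\<Prod>i<n. x i ^ \<alpha> i)"

definition Mpow :: "nat \<Rightarrow> (nat \<Rightarrow> 'r::comm_ring_1) \<Rightarrow> nat \<Rightarrow> 'r set" where
  "Mpow n x N = {r. \<exists>f. r = (\<Sum>\<alpha>\<in>monomials_deg n N. f \<alpha> * xpow n x \<alpha>)}"

abbreviation Mideal :: "nat \<Rightarrow> (nat \<Rightarrow> 'r::comm_ring_1) \<Rightarrow> 'r set" where
  "Mideal n x \<equiv> Mpow n x 1"

text \<open>R/M = k: the composite k -> R -> R/M is bijective.\<close>
definition residue_field_k :: "('k::field \<Rightarrow> 'r::comm_ring_1) \<Rightarrow> nat \<Rightarrow> (nat \<Rightarrow> 'r) \<Rightarrow> bool" where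
  "residue_field_k \<iota> n x \<longleftrightarrow> (\<forall>r. \<exists>!c. r - \<iota> c \<in> Mideal n x)"

text \<open>R is M-adically complete (and separated).\<close>
definition M_adically_complete :: "nat \<Rightarrow> (nat \<Rightarrow> 'r::comm_ring_1) \<Rightarrow> bool" where
  "M_adically_complete n x \<longleftrightarrow>
     (\<Inter>N. Mpow n x N) = {0} \<and>
     (\<forall>a :: nat \<Rightarrow> 'r. (\<forall>N. a (Suc N) - a N \<in> Mpow n x N) \<longrightarrow> (\<exists>b. \<forall>N. b - a N \<in> Mpow n x N))"

text \<open>p(0): the image of p in R/M = k.\<close>
definition ev0 :: "('k::field \<Rightarrow> 'r::comm_ring_1) \<Rightarrow> nat \<Rightarrow> (nat \<Rightarrow> 'r) \<Rightarrow> 'r \<Rightarrow> 'k" where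
  "ev0 \<iota> n x p = (THE c. p - \<iota> c \<in> Mideal n x)"

definition partial :: "('k::field \<Rightarrow> 'r::comm_ring_1) \<Rightarrow> nat \<Rightarrow> (nat \<Rightarrow> 'r) \<Rightarrow> nat \<Rightarrow> 'r \<Rightarrow> 'r" where
  "partial \<iota> n x i = (THE \<delta>. is_der \<iota> \<delta> \<and> (\<forall>j<n. \<delta> (x j) = (if j = i then 1 else 0)))"

definition dpow :: "('k::field \<Rightarrow> 'r::comm_ring_1) \<Rightarrow> nat \<Rightarrow> (nat \<Rightarrow> 'r) \<Rightarrow> (nat \<Rightarrow> int) \<Rightarrow> 'r \<Rightarrow> 'r" where
  "dpow \<iota> n x l = foldr (\<lambda>t f. (partial \<iota> n x t ^^ nat (l t)) \<circ> f) [0..<n] id"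

text \<open>Elements of the operator rings are coefficient functions
  c :: (nat => int) => 'r, c e being the coefficient p_e of d^e = d_0^(e_0)...d_(n-1)^(e_(n-1)).\<close>
definition hatD :: "nat \<Rightarrow> (nat \<Rightarrow> 'r::comm_ring_1) \<Rightarrow> nat \<Rightarrow> ((nat \<Rightarrow> int) \<Rightarrow> 'r) \<Rightarrow> bool" where
  "hatD n x m c \<longleftrightarrow>
     (\<forall>e. c e \<noteq> 0 \<longrightarrow> (\<forall>i<m. 0 \<le> e i) \<and> (\<forall>i\<ge>m. e i = 0))
     \<and> (\<forall>N. finite {e. c e \<notin> Mpow n x N})"

text \<open>Slice of c at exponent a of d_t: the coefficient function of q_a in c = sum_a q_a d_t^a.\<close>
definition slice :: "nat \<Rightarrow> int \<Rightarrow> ((nat \<Rightarrow> int) \<Rightarrow> 'r::zero) \<Rightarrow> (nat \<Rightarrow> int) \<Rightarrow> 'r" where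
  "slice t a c = (\<lambda>e. if e t = 0 then c (e(t := a)) else 0)"

text \<open>hatE_lev l = hatD_m((d_m^-1))...((d_(m+l-1)^-1)) (iterated formal Laurent series in
  d_m^-1, then d_(m+1)^-1, ...; 0-based indices).  hatE_(m,n-m) = hatE_lev (n-m).\<close>
fun hatE_lev :: "nat \<Rightarrow> (nat \<Rightarrow> 'r::comm_ring_1) \<Rightarrow> nat \<Rightarrow> nat \<Rightarrow> ((nat \<Rightarrow> int) \<Rightarrow> 'r) \<Rightarrow> bool" where
  "hatE_lev n x m 0 c = hatD n x m c"
| "hatE_lev n x m (Suc l) c \<longleftrightarrow>
     (\<forall>e. c e \<noteq> 0 \<longrightarrow> (\<forall>i\<ge>m + Suc l. e i = 0))
     \<and> (\<exists>B. \<forall>e. c e \<noteq> 0 \<longrightarrow> e (m + l) \<le> B)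
     \<and> (\<forall>a. hatE_lev n x m l (slice (m + l) a c))"

definition hatE :: "nat \<Rightarrow> (nat \<Rightarrow> 'r::comm_ring_1) \<Rightarrow> nat \<Rightarrow> ((nat \<Rightarrow> int) \<Rightarrow> 'r) \<Rightarrow> bool" where
  "hatE n x m c \<longleftrightarrow> hatE_lev n x m (n - m) c"

text \<open>hatD_lev l = hatD_m[d_m, ..., d_(m+l-1)] (polynomials); hatD_(m,n-m) = hatD_lev (n-m).\<close>
fun hatD_lev :: "nat \<Rightarrow> (nat \<Rightarrow> 'r::comm_ring_1) \<Rightarrow> nat \<Rightarrow> nat \<Rightarrow> ((nat \<Rightarrow> int) \<Rightarrow> 'r) \<Rightarrow> bool" where
  "hatD_lev n x m 0 c = hatD n x m c"
| "hatD_lev n x m (Suc l) c \<longleftrightarrow>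
     (\<forall>e. c e \<noteq> 0 \<longrightarrow> (\<forall>i\<ge>m + Suc l. e i = 0))
     \<and> (\<exists>B. \<forall>e. c e \<noteq> 0 \<longrightarrow> 0 \<le> e (m + l) \<and> e (m + l) \<le> B)
     \<and> (\<forall>a. hatD_lev n x m l (slice (m + l) a c))"

definition hatDmn :: "nat \<Rightarrow> (nat \<Rightarrow> 'r::comm_ring_1) \<Rightarrow> nat \<Rightarrow> ((nat \<Rightarrow> int) \<Rightarrow> 'r) \<Rightarrow> bool" where
  "hatDmn n x m c \<longleftrightarrow> hatD_lev n x m (n - m) c"

text \<open>Elements of W_(m,n-m) are coefficient functions w :: (nat => int) => 'k, w i being the
  coefficient of z^(-i) = z_0^(-i_0)...z_(n-1)^(-i_(n-1)) (so the class of p d^i is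
  p(0) z^(-i)).\<close>
definition W0 :: "nat \<Rightarrow> ((nat \<Rightarrow> int) \<Rightarrow> 'k::zero) set" where
  "W0 n = {w. finite {i. w i \<noteq> 0} \<and> (\<forall>i. w i \<noteq> 0 \<longrightarrow> (\<forall>t<n. 0 \<le> i t) \<and> (\<forall>t\<ge>n. i t = 0))}"

text \<open>Right action of A in hatE on w in W_0: w.A is the class mod M hatE of
  (sum_j w_j d^j) A, computed with the Leibniz rule
  d^j p d^i = sum_(0<=l<=j) binom(j,l) d^l(p) d^(i+j-l)  (j in N^n, finite sum).\<close>
definition act :: "('k::field \<Rightarrow> 'r::comm_ring_1) \<Rightarrow> nat \<Rightarrow> (nat \<Rightarrow> 'r)
     \<Rightarrow> ((nat \<Rightarrow> int) \<Rightarrow> 'k) \<Rightarrow> ((nat \<Rightarrow> int) \<Rightarrow> 'r) \<Rightarrow> (nat \<Rightarrow> int) \<Rightarrow> 'k" where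
  "act \<iota> n x w A s =
     (\<Sum>j\<in>{j. w j \<noteq> 0}. w j *
        (\<Sum>l\<in>{l. \<forall>t. 0 \<le> l t \<and> l t \<le> j t}.
           (\<Prod>t<n. of_nat (nat (j t) choose nat (l t))) *
           ev0 \<iota> n x (dpow \<iota> n x l (A (\<lambda>t. s t - j t + l t)))))"

end

theory Submission
  imports Defs "HOL-Library.FuncSet"
begin

text \<open>
  Write A = sum_e A_e d^e.  The operators of hatD_(m,n-m) are exactly the
  elements of hatE_(m,n-m) whose exponents e all lie in N^n; so the theorem says that an
  element A of hatE_(m,n-m) preserves W_0 = k[z^-1] iff A_e = 0 whenever some e_t < 0.

  If all exponents are nonnegative, the coefficient of z^(-s) in z^(-j).A involves only
  ev0 (d^l A_(s-j+l)) with 0 <= l <= j; such a term vanishes unless A_(s-j+l) is outside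
  M^(|l|+1), which happens for finitely many indices since A_e -> 0.  Hence W_0 A is in W_0.

  Conversely, if W_0 A is in W_0 and s has a negative entry, then the coefficient of z^(-s)
  in z^(-j).A is zero; by induction on |j| all lower-order Leibniz terms vanish, leaving
  ev0 (d^j A_s) = 0 for every j in N^n.  A Taylor-type argument (an element of R all of whose
  derivatives vanish at 0 lies in every power of M) and M-adic separatedness give A_s = 0.
\<close>

lemma finite_bounded_funs:
  assumes "finite A" "\<And>i. i \<in> A \<Longrightarrow> finite (S i)"
  shows "finite {f. (\<forall>i\<in>A. f i \<in> S i) \<and> (\<forall>i. i \<notin> A \<longrightarrow> f i = d)}"
proof -
  have "{f. (\<forall>i\<in>A. f i \<in> S i) \<and> (\<forall>i. i \<notin> A \<longrightarrow> f i = d)}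
        \<subseteq> (\<lambda>g i. if i \<in> A then g i else d) ` (\<Pi>\<^sub>E i \<in> A. S i)"
  proof
    fix f assume f: "f \<in> {f. (\<forall>i\<in>A. f i \<in> S i) \<and> (\<forall>i. i \<notin> A \<longrightarrow> f i = d)}"
    have "f = (\<lambda>i. if i \<in> A then restrict f A i else d)" using f by (auto simp: fun_eq_iff)
    moreover have "restrict f A \<in> (\<Pi>\<^sub>E i \<in> A. S i)" using f by auto
    ultimately show "f \<in> (\<lambda>g i. if i \<in> A then g i else d) ` (\<Pi>\<^sub>E i \<in> A. S i)" by blast
  qed
  moreover have "finite ((\<lambda>g i. if i \<in> A then g i else d) ` (\<Pi>\<^sub>E i \<in> A. S i))"
    using assms by (intro finite_imageI finite_PiE) auto
  ultimately show ?thesis by (rule finite_subset)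
qed

lemma finite_monomials_deg: "finite (monomials_deg n N)"
proof -
  have "monomials_deg n N \<subseteq> {f. (\<forall>i\<in>{..<n}. f i \<in> {..N}) \<and> (\<forall>i. i \<notin> {..<n} \<longrightarrow> f i = 0)}"
  proof
    fix \<alpha> assume \<alpha>: "\<alpha> \<in> monomials_deg n N"
    have "\<alpha> i \<le> N" if "i < n" for i
    proof -
      have "\<alpha> i \<le> sum \<alpha> {..<n}" using that by (intro member_le_sum) auto
      thus ?thesis using \<alpha> by (simp add: monomials_deg_def)
    qed
    thus "\<alpha> \<in> {f. (\<forall>i\<in>{..<n}. f i \<in> {..N}) \<and> (\<forall>i. i \<notin> {..<n} \<longrightarrow> f i = 0)}"
      using \<alpha> by (auto simp: monomials_deg_def)
  qed
  thus ?thesis by (rule finite_subset[OF _ finite_bounded_funs]) auto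
qed

abbreviation lower_box :: "(nat \<Rightarrow> int) \<Rightarrow> (nat \<Rightarrow> int) set" where
  "lower_box j \<equiv> {l. \<forall>t. 0 \<le> l t \<and> l t \<le> j t}"

lemma finite_lower_box:
  assumes "\<forall>t\<ge>n. j t = 0"
  shows "finite (lower_box j)"
proof -
  have "lower_box j \<subseteq> {f. (\<forall>i\<in>{..<n}. f i \<in> {0..j i}) \<and> (\<forall>i. i \<notin> {..<n} \<longrightarrow> f i = 0)}"
    using assms by (auto simp: not_less) (metis order_antisym)
  thus ?thesis by (rule finite_subset[OF _ finite_bounded_funs]) simp_all
qed

section \<open>Powers of the maximal ideal\<close>

lemma Mpow_zero: "0 \<in> Mpow n x N"
  unfolding Mpow_def by (rule CollectI, rule exI[of _ "\<lambda>_. 0"]) simp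

lemma Mpow_add: "a \<in> Mpow n x N \<Longrightarrow> b \<in> Mpow n x N \<Longrightarrow> a + b \<in> Mpow n x N"
  unfolding Mpow_def
proof clarify
  fix f g
  show "\<exists>h. (\<Sum>\<alpha>\<in>monomials_deg n N. f \<alpha> * xpow n x \<alpha>) + (\<Sum>\<alpha>\<in>monomials_deg n N. g \<alpha> * xpow n x \<alpha>)
        = (\<Sum>\<alpha>\<in>monomials_deg n N. h \<alpha> * xpow n x \<alpha>)"
    by (rule exI[of _ "\<lambda>\<alpha>. f \<alpha> + g \<alpha>"]) (simp add: sum.distrib distrib_right)
qed

lemma Mpow_sum: "(\<And>s. s \<in> S \<Longrightarrow> g s \<in> Mpow n x N) \<Longrightarrow> sum g S \<in> Mpow n x N"
  by (induction S rule: infinite_finite_induct) (simp_all add: Mpow_zero Mpow_add)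

lemma Mpow_monomial: "\<alpha> \<in> monomials_deg n N \<Longrightarrow> r * xpow n x \<alpha> \<in> Mpow n x N"
  unfolding Mpow_def
proof (rule CollectI, rule exI[of _ "\<lambda>\<beta>. if \<beta> = \<alpha> then r else 0"])
  assume \<alpha>: "\<alpha> \<in> monomials_deg n N"
  have "(\<Sum>\<beta>\<in>monomials_deg n N. (if \<beta> = \<alpha> then r else 0) * xpow n x \<beta>)
      = (\<Sum>\<beta>\<in>monomials_deg n N. (if \<beta> = \<alpha> then r * xpow n x \<beta> else 0))"
    by (rule sum.cong) auto
  also have "\<dots> = r * xpow n x \<alpha>" using \<alpha> finite_monomials_deg by (simp add: sum.delta')
  finally show "r * xpow n x \<alpha> = (\<Sum>\<beta>\<in>monomials_deg n N. (if \<beta> = \<alpha> then r else 0) * xpow n x \<beta>)" ..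
qed

lemma xpow_add: "xpow n x (\<lambda>i. \<alpha> i + \<beta> i) = xpow n x \<alpha> * xpow n x \<beta>"
  unfolding xpow_def by (simp add: power_add prod.distrib)

lemma monomials_deg_add:
  "\<alpha> \<in> monomials_deg n A \<Longrightarrow> \<beta> \<in> monomials_deg n B \<Longrightarrow> (\<lambda>i. \<alpha> i + \<beta> i) \<in> monomials_deg n (A + B)"
  unfolding monomials_deg_def by (auto simp: sum.distrib)

lemma Mpow_mult_Mpow: "a \<in> Mpow n x A \<Longrightarrow> b \<in> Mpow n x B \<Longrightarrow> a * b \<in> Mpow n x (A + B)"
proof -
  assume "a \<in> Mpow n x A" "b \<in> Mpow n x B"
  then obtain f g where a: "a = (\<Sum>\<alpha>\<in>monomials_deg n A. f \<alpha> * xpow n x \<alpha>)"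
     and b: "b = (\<Sum>\<beta>\<in>monomials_deg n B. g \<beta> * xpow n x \<beta>)" by (auto simp: Mpow_def)
  have "a * b = (\<Sum>\<alpha>\<in>monomials_deg n A. \<Sum>\<beta>\<in>monomials_deg n B. (f \<alpha> * g \<beta>) * xpow n x (\<lambda>i. \<alpha> i + \<beta> i))"
    unfolding a b sum_product xpow_add by (simp add: ac_simps)
  also have "\<dots> \<in> Mpow n x (A + B)"
    by (intro Mpow_sum Mpow_monomial monomials_deg_add)
  finally show ?thesis .
qed

lemma Mpow_0: "Mpow n x 0 = UNIV"
proof -
  have "(\<lambda>_. 0) \<in> monomials_deg n 0" by (simp add: monomials_deg_def)
  from Mpow_monomial[OF this] show ?thesis by (auto simp: xpow_def)
qed

text \<open>The powers of M decrease: a monomial of positive degree splits off a factor x_i.\<close>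
lemma Mpow_Suc_subset: "a \<in> Mpow n x (Suc N) \<Longrightarrow> a \<in> Mpow n x N"
proof -
  assume "a \<in> Mpow n x (Suc N)"
  then obtain f where a: "a = (\<Sum>\<alpha>\<in>monomials_deg n (Suc N). f \<alpha> * xpow n x \<alpha>)" by (auto simp: Mpow_def)
  have "f \<alpha> * xpow n x \<alpha> \<in> Mpow n x N" if \<alpha>: "\<alpha> \<in> monomials_deg n (Suc N)" for \<alpha>
  proof -
    have "sum \<alpha> {..<n} \<noteq> 0" using \<alpha> by (simp add: monomials_deg_def)
    then obtain i where i: "i < n" "0 < \<alpha> i" by (metis lessThan_iff not_gr0 sum.neutral)
    define \<alpha>' where "\<alpha>' = \<alpha>(i := \<alpha> i - 1)"
    define u where "u = (\<lambda>j. if j = i then 1 else (0::nat))"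
    have split: "\<alpha> = (\<lambda>j. u j + \<alpha>' j)" using i by (auto simp: \<alpha>'_def u_def fun_eq_iff)
    have "sum \<alpha> {..<n} = sum u {..<n} + sum \<alpha>' {..<n}"
      by (subst split) (simp add: sum.distrib)
    moreover have "sum u {..<n} = 1" using i by (simp add: u_def)
    ultimately have "\<alpha>' \<in> monomials_deg n N" using \<alpha> i by (auto simp: monomials_deg_def \<alpha>'_def)
    hence "(f \<alpha> * xpow n x u) * xpow n x \<alpha>' \<in> Mpow n x N" by (rule Mpow_monomial)
    moreover have "f \<alpha> * xpow n x \<alpha> = (f \<alpha> * xpow n x u) * xpow n x \<alpha>'"
      by (subst split) (simp add: xpow_add mult.assoc)
    ultimately show ?thesis by simp
  qed
  thus ?thesis unfolding a by (intro Mpow_sum)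
qed

definition k_linear :: "('k::field \<Rightarrow> 'r::comm_ring_1) \<Rightarrow> ('r \<Rightarrow> 'r) \<Rightarrow> bool" where
  "k_linear \<iota> f \<longleftrightarrow> (\<forall>a b. f (a + b) = f a + f b) \<and> (\<forall>c a. f (\<iota> c * a) = \<iota> c * f a)"

lemma k_linear_add: "k_linear \<iota> f \<Longrightarrow> f (a + b) = f a + f b"
  by (simp add: k_linear_def)

lemma k_linear_scale: "k_linear \<iota> f \<Longrightarrow> f (\<iota> c * a) = \<iota> c * f a"
  by (simp add: k_linear_def)

lemma k_linear_zero: "k_linear \<iota> f \<Longrightarrow> f 0 = 0"
  using k_linear_add[of \<iota> f 0 0] by simp

lemma k_linear_sum: "k_linear \<iota> f \<Longrightarrow> f (sum g S) = (\<Sum>s\<in>S. f (g s))"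
  by (induction S rule: infinite_finite_induct) (simp_all add: k_linear_zero k_linear_add)

lemma k_linear_id: "k_linear \<iota> id"
  by (simp add: k_linear_def)

lemma k_linear_comp: "k_linear \<iota> f \<Longrightarrow> k_linear \<iota> g \<Longrightarrow> k_linear \<iota> (f \<circ> g)"
  by (simp add: k_linear_def)

lemma k_linear_funpow: "k_linear \<iota> f \<Longrightarrow> k_linear \<iota> (f ^^ k)"
  by (induction k) (auto simp: k_linear_id intro: k_linear_comp)

lemma der_k_linear: "is_der \<iota> \<delta> \<Longrightarrow> k_linear \<iota> \<delta>"
  unfolding is_der_def k_linear_def by blast

lemma der_mult: "is_der \<iota> \<delta> \<Longrightarrow> \<delta> (a * b) = a * \<delta> b + b * \<delta> a"
  by (simp add: is_der_def)

lemma der_one: "is_der \<iota> \<delta> \<Longrightarrow> \<delta> 1 = 0"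
  using der_mult[of \<iota> \<delta> 1 1] by simp

lemma der_power: "is_der \<iota> \<delta> \<Longrightarrow> \<delta> (a ^ k) = of_nat k * a ^ (k - 1) * \<delta> a"
proof (induction k)
  case 0 then show ?case by (simp add: der_one)
next
  case (Suc k)
  have "\<delta> (a ^ Suc k) = a * (of_nat k * a ^ (k - 1) * \<delta> a) + a ^ k * \<delta> a"
    using Suc der_mult[OF Suc.prems] by simp
  also have "\<dots> = of_nat (Suc k) * a ^ (Suc k - 1) * \<delta> a"
    by (cases k) (simp_all add: algebra_simps)
  finally show ?case .
qed

lemma der_prod_const: "is_der \<iota> \<delta> \<Longrightarrow> (\<And>i. i \<in> S \<Longrightarrow> \<delta> (g i) = 0) \<Longrightarrow> \<delta> (prod g S) = 0"
  by (induction S rule: infinite_finite_induct) (simp_all add: der_one der_mult)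

text \<open>falling a k = a (a-1) ... (a-k+1): the scalar produced by d_t^k on x_t^a.  It
  vanishes exactly when k > a, which makes the monomials dual to the operators d^l.\<close>
fun falling :: "nat \<Rightarrow> nat \<Rightarrow> nat" where
  "falling a 0 = 1"
| "falling a (Suc k) = falling a k * (a - k)"

lemma falling_nonzero: "k \<le> a \<Longrightarrow> falling a k \<noteq> 0"
  by (induction k) auto

lemma falling_zero: "a < k \<Longrightarrow> falling a k = 0"
  by (induction k) (auto simp: less_Suc_eq)

text \<open>d^l restricted to the coordinates listed in ts; dpow is the case ts = [0..<n].
  Induction over the list is how properties of dpow are established.\<close>
definition dop_list :: "('k::field \<Rightarrow> 'r::comm_ring_1) \<Rightarrow> nat \<Rightarrow> (nat \<Rightarrow> 'r) \<Rightarrow> nat list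
    \<Rightarrow> (nat \<Rightarrow> int) \<Rightarrow> 'r \<Rightarrow> 'r" where
  "dop_list \<iota> n x ts l = foldr (\<lambda>t f. (partial \<iota> n x t ^^ nat (l t)) \<circ> f) ts id"

lemma dop_list_Nil: "dop_list \<iota> n x [] l = id"
  by (simp add: dop_list_def)

lemma dop_list_Cons: "dop_list \<iota> n x (t # ts) l = (partial \<iota> n x t ^^ nat (l t)) \<circ> dop_list \<iota> n x ts l"
  by (simp add: dop_list_def)

lemma dpow_dop_list: "dpow \<iota> n x l = dop_list \<iota> n x [0..<n] l"
  by (simp add: dpow_def dop_list_def)

locale coordinate_setting =
  fixes \<iota> :: "'k::field_char_0 \<Rightarrow> 'r::comm_ring_1" and n :: nat and x :: "nat \<Rightarrow> 'r"
  assumes hom: "k_algebra_hom \<iota>"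
    and coords: "coord_system \<iota> n x"
    and residue: "residue_field_k \<iota> n x"
begin

lemma iota_add: "\<iota> (a + b) = \<iota> a + \<iota> b"
  using hom by (simp add: k_algebra_hom_def)

lemma iota_mult: "\<iota> (a * b) = \<iota> a * \<iota> b"
  using hom by (simp add: k_algebra_hom_def)

lemma iota_0: "\<iota> 0 = 0"
  using iota_add[of 0 0] by simp

lemma iota_of_nat: "\<iota> (of_nat k) = of_nat k"
  using hom by (induction k) (simp_all add: iota_0 iota_add k_algebra_hom_def)

lemma k_linear_of_nat: "k_linear \<iota> f \<Longrightarrow> f (of_nat k * a) = of_nat k * f a"
  using k_linear_scale[of \<iota> f "of_nat k" a] by (simp add: iota_of_nat)

lemma ev0_eq: "p - \<iota> c \<in> Mideal n x \<Longrightarrow> ev0 \<iota> n x p = c"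
  unfolding ev0_def
proof (rule the_equality)
  fix c' assume "p - \<iota> c \<in> Mideal n x" "p - \<iota> c' \<in> Mideal n x"
  moreover have "\<exists>!c. p - \<iota> c \<in> Mideal n x" using residue by (simp add: residue_field_k_def)
  ultimately show "c' = c" by blast
qed

lemma ev0_residue: "p - \<iota> (ev0 \<iota> n x p) \<in> Mideal n x"
proof -
  obtain c where "p - \<iota> c \<in> Mideal n x" using residue unfolding residue_field_k_def by blast
  with ev0_eq show ?thesis by simp
qed

lemma ev0_Mideal: "p \<in> Mideal n x \<Longrightarrow> ev0 \<iota> n x p = 0"
  by (rule ev0_eq) (simp add: iota_0)

lemma partial_der: "is_der \<iota> (partial \<iota> n x t)"
  and partial_x: "j < n \<Longrightarrow> partial \<iota> n x t (x j) = (if j = t then 1 else 0)"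
proof -
  have "\<exists>!\<delta>. is_der \<iota> \<delta> \<and> (\<forall>j<n. \<delta> (x j) = (if j = t then 1 else 0))"
    using coords by (simp add: coord_system_def)
  from theI'[OF this] show "is_der \<iota> (partial \<iota> n x t)"
     "j < n \<Longrightarrow> partial \<iota> n x t (x j) = (if j = t then 1 else 0)"
    by (simp_all add: partial_def)
qed

lemma partial_k_linear: "k_linear \<iota> (partial \<iota> n x t)"
  by (rule der_k_linear[OF partial_der])

lemma dop_list_k_linear: "k_linear \<iota> (dop_list \<iota> n x ts l)"
proof (induction ts)
  case Nil show ?case unfolding dop_list_Nil by (rule k_linear_id)
next
  case (Cons t ts) show ?case
    unfolding dop_list_Cons by (intro k_linear_comp k_linear_funpow partial_k_linear Cons)
qed

lemma dpow_k_linear: "k_linear \<iota> (dpow \<iota> n x l)"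
  unfolding dpow_dop_list by (rule dop_list_k_linear)

text \<open>d_t x^alpha = alpha_t x^(alpha - e_t), since the x_i with i <> t are d_t-constants.\<close>
lemma partial_xpow:
  assumes t: "t < n"
  shows "partial \<iota> n x t (xpow n x \<alpha>) = of_nat (\<alpha> t) * xpow n x (\<alpha>(t := \<alpha> t - 1))"
proof -
  let ?d = "partial \<iota> n x t"
  let ?P = "\<Prod>i\<in>{..<n} - {t}. x i ^ \<alpha> i"
  have split: "xpow n x \<beta> = x t ^ \<beta> t * (\<Prod>i\<in>{..<n} - {t}. x i ^ \<beta> i)" for \<beta>
    unfolding xpow_def using t by (subst prod.remove[of _ t]) auto
  have rest: "(\<Prod>i\<in>{..<n} - {t}. x i ^ (\<alpha>(t := \<alpha> t - 1)) i) = ?P"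
    by (rule prod.cong) auto
  have "?d ?P = 0"
    by (rule der_prod_const[OF partial_der]) (auto simp: der_power[OF partial_der] partial_x)
  hence "?d (xpow n x \<alpha>) = ?P * (of_nat (\<alpha> t) * x t ^ (\<alpha> t - 1))"
    using t by (simp add: split der_mult[OF partial_der] der_power[OF partial_der] partial_x)
  also have "\<dots> = of_nat (\<alpha> t) * xpow n x (\<alpha>(t := \<alpha> t - 1))"
    by (subst split[of "\<alpha>(t := \<alpha> t - 1)"]) (simp add: rest ac_simps)
  finally show ?thesis .
qed

lemma partial_Mpow:
  assumes t: "t < n" and p: "p \<in> Mpow n x (Suc N)"
  shows "partial \<iota> n x t p \<in> Mpow n x N"
proof -
  let ?d = "partial \<iota> n x t"
  from p obtain f where pf: "p = (\<Sum>\<alpha>\<in>monomials_deg n (Suc N). f \<alpha> * xpow n x \<alpha>)"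
    by (auto simp: Mpow_def)
  have "?d p = (\<Sum>\<alpha>\<in>monomials_deg n (Suc N). f \<alpha> * ?d (xpow n x \<alpha>) + xpow n x \<alpha> * ?d (f \<alpha>))"
    unfolding pf by (simp add: k_linear_sum[OF partial_k_linear] der_mult[OF partial_der])
  also have "\<dots> \<in> Mpow n x N"
  proof (intro Mpow_sum Mpow_add)
    fix \<alpha> assume \<alpha>: "\<alpha> \<in> monomials_deg n (Suc N)"
    have "?d (f \<alpha>) * xpow n x \<alpha> \<in> Mpow n x (Suc N)" by (rule Mpow_monomial[OF \<alpha>])
    thus "xpow n x \<alpha> * ?d (f \<alpha>) \<in> Mpow n x N" by (simp add: mult.commute Mpow_Suc_subset)
    show "f \<alpha> * ?d (xpow n x \<alpha>) \<in> Mpow n x N"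
    proof (cases "\<alpha> t = 0")
      case True then show ?thesis using t by (simp add: partial_xpow Mpow_zero)
    next
      case False
      have "sum \<alpha> {..<n} = \<alpha> t + sum \<alpha> ({..<n} - {t})"
        using t by (subst sum.remove) auto
      moreover have "sum (\<alpha>(t := \<alpha> t - 1)) {..<n} = (\<alpha> t - 1) + sum \<alpha> ({..<n} - {t})"
        using t by (subst sum.remove) (auto intro!: sum.cong split: if_splits)
      ultimately have "\<alpha>(t := \<alpha> t - 1) \<in> monomials_deg n N"
        using \<alpha> t False by (auto simp: monomials_deg_def)
      from Mpow_monomial[OF this, of "f \<alpha> * of_nat (\<alpha> t)"] show ?thesis
        using t by (simp add: partial_xpow mult.assoc)
    qed
  qed
  finally show ?thesis .
qed

lemma partial_funpow_Mpow:
  "t < n \<Longrightarrow> p \<in> Mpow n x N \<Longrightarrow> (partial \<iota> n x t ^^ k) p \<in> Mpow n x (N - k)"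
proof (induction k)
  case 0 then show ?case by simp
next
  case (Suc k)
  show ?case
  proof (cases "N - k")
    case 0 then show ?thesis by (simp add: Mpow_0)
  next
    case (Suc N')
    with partial_Mpow[OF Suc.prems(1)] Suc.IH[OF Suc.prems] show ?thesis by (simp add: diff_Suc)
  qed
qed

lemma dop_list_Mpow: "set ts \<subseteq> {..<n} \<Longrightarrow> p \<in> Mpow n x N \<Longrightarrow>
   dop_list \<iota> n x ts l p \<in> Mpow n x (N - sum_list (map (\<lambda>t. nat (l t)) ts))"
proof (induction ts arbitrary: N)
  case Nil then show ?case by (simp add: dop_list_Nil)
next
  case (Cons t ts)
  have "dop_list \<iota> n x ts l p \<in> Mpow n x (N - sum_list (map (\<lambda>t. nat (l t)) ts))" using Cons by simp
  from partial_funpow_Mpow[OF _ this, of t "nat (l t)"] Cons.prems show ?case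
    by (simp add: dop_list_Cons diff_diff_add add.commute)
qed

lemma dpow_Mpow: "p \<in> Mpow n x N \<Longrightarrow> dpow \<iota> n x l p \<in> Mpow n x (N - (\<Sum>t<n. nat (l t)))"
  using dop_list_Mpow[of "[0..<n]" p N l]
  by (simp add: dpow_dop_list sum_list_distinct_conv_sum_set atLeast0LessThan)

subsection \<open>Derivatives of monomials and the Taylor lemma\<close>

lemma partial_funpow_xpow:
  assumes t: "t < n"
  shows "(partial \<iota> n x t ^^ k) (xpow n x \<alpha>) = of_nat (falling (\<alpha> t) k) * xpow n x (\<alpha>(t := \<alpha> t - k))"
proof (induction k)
  case 0 then show ?case by simp
next
  case (Suc k)
  have "(partial \<iota> n x t ^^ Suc k) (xpow n x \<alpha>)
      = partial \<iota> n x t (of_nat (falling (\<alpha> t) k) * xpow n x (\<alpha>(t := \<alpha> t - k)))"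
    by (simp only: funpow.simps o_apply Suc.IH)
  also have "\<dots> = of_nat (falling (\<alpha> t) k) * (of_nat (\<alpha> t - k) * xpow n x (\<alpha>(t := \<alpha> t - k - 1)))"
    by (simp only: k_linear_of_nat[OF partial_k_linear] partial_xpow[OF t]) simp
  also have "\<dots> = of_nat (falling (\<alpha> t) (Suc k)) * xpow n x (\<alpha>(t := \<alpha> t - Suc k))"
    by (simp add: mult.assoc)
  finally show ?case .
qed

lemma dop_list_xpow: "distinct ts \<Longrightarrow> set ts \<subseteq> {..<n} \<Longrightarrow>
  dop_list \<iota> n x ts l (xpow n x \<alpha>) = of_nat (\<Prod>t\<in>set ts. falling (\<alpha> t) (nat (l t)))
     * xpow n x (\<lambda>i. if i \<in> set ts then \<alpha> i - nat (l i) else \<alpha> i)"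
proof (induction ts)
  case Nil then show ?case by (simp add: dop_list_Nil)
next
  case (Cons t ts)
  let ?\<beta> = "\<lambda>i. if i \<in> set ts then \<alpha> i - nat (l i) else \<alpha> i"
  have t: "t < n" "t \<notin> set ts" using Cons.prems by auto
  have "dop_list \<iota> n x (t # ts) l (xpow n x \<alpha>) =
     (partial \<iota> n x t ^^ nat (l t)) (of_nat (\<Prod>t\<in>set ts. falling (\<alpha> t) (nat (l t))) * xpow n x ?\<beta>)"
    using Cons by (simp only: dop_list_Cons o_apply distinct.simps set_simps insert_subset)
  also have "\<dots> = of_nat (\<Prod>t\<in>set ts. falling (\<alpha> t) (nat (l t)))
      * (of_nat (falling (?\<beta> t) (nat (l t))) * xpow n x (?\<beta>(t := ?\<beta> t - nat (l t))))"
    by (simp only: k_linear_of_nat[OF k_linear_funpow[OF partial_k_linear]] partial_funpow_xpow[OF t(1)])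
  also have "?\<beta>(t := ?\<beta> t - nat (l t)) = (\<lambda>i. if i \<in> set (t # ts) then \<alpha> i - nat (l i) else \<alpha> i)"
    using t by (auto simp: fun_eq_iff)
  also have "?\<beta> t = \<alpha> t" using t by simp
  finally show ?case using t by (simp add: mult.assoc mult.commute)
qed

lemma dpow_xpow: "dpow \<iota> n x l (xpow n x \<alpha>) = of_nat (\<Prod>t<n. falling (\<alpha> t) (nat (l t)))
     * xpow n x (\<lambda>i. if i < n then \<alpha> i - nat (l i) else \<alpha> i)"
  using dop_list_xpow[of "[0..<n]" l \<alpha>] by (simp add: dpow_dop_list atLeast0LessThan)

lemma dpow_xpow_same: "dpow \<iota> n x (int \<circ> \<alpha>) (xpow n x \<alpha>) = of_nat (\<Prod>t<n. falling (\<alpha> t) (\<alpha> t))"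
proof -
  have "xpow n x (\<lambda>i. if i < n then \<alpha> i - nat (int (\<alpha> i)) else \<alpha> i) = 1"
    by (simp add: xpow_def)
  thus ?thesis by (simp add: dpow_xpow o_def)
qed

lemma dpow_xpow_other:
  assumes "\<alpha> \<in> monomials_deg n N" "\<gamma> \<in> monomials_deg n N" "\<alpha> \<noteq> \<gamma>"
  shows "dpow \<iota> n x (int \<circ> \<gamma>) (xpow n x \<alpha>) = 0"
proof -
  have "\<exists>t<n. \<alpha> t < \<gamma> t"
  proof (rule ccontr)
    assume "\<not> ?thesis"
    hence le: "\<forall>t<n. \<gamma> t \<le> \<alpha> t" by auto
    have "\<alpha> t = \<gamma> t" for t
    proof (cases "t < n")
      case True
      show ?thesis
      proof (rule ccontr)
        assume "\<alpha> t \<noteq> \<gamma> t"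
        with le True have "sum \<gamma> {..<n} < sum \<alpha> {..<n}"
          by (intro sum_strict_mono_ex1) (auto intro!: bexI[of _ t])
        thus False using assms(1,2) by (simp add: monomials_deg_def)
      qed
    qed (use assms(1,2) in \<open>simp add: monomials_deg_def\<close>)
    thus False using assms(3) by blast
  qed
  then obtain t where t: "t < n" "\<alpha> t < \<gamma> t" by blast
  have "(\<Prod>t<n. falling (\<alpha> t) (nat ((int \<circ> \<gamma>) t))) = 0"
    using t by (intro prod_zero) (auto intro!: bexI[of _ t] falling_zero)
  thus ?thesis by (simp only: dpow_xpow of_nat_0 mult_zero_left)
qed

text \<open>Induction on N: write p in M^N as sum_alpha f_alpha x^alpha over
  degree N; applying d^gamma isolates ev0 f_gamma times a nonzero integer, mod M.\<close>
lemma taylor_vanishing: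
  assumes vanish: "\<And>\<gamma>. (\<forall>i\<ge>n. \<gamma> i = 0) \<Longrightarrow> ev0 \<iota> n x (dpow \<iota> n x (int \<circ> \<gamma>) p) = 0"
  shows "p \<in> Mpow n x N"
proof (induction N)
  case 0 then show ?case by (simp add: Mpow_0)
next
  case (Suc N)
  let ?D = "monomials_deg n N"
  from Suc obtain f where pf: "p = (\<Sum>\<alpha>\<in>?D. f \<alpha> * xpow n x \<alpha>)" by (auto simp: Mpow_def)
  define c where "c \<alpha> = ev0 \<iota> n x (f \<alpha>)" for \<alpha>
  define r where "r = (\<Sum>\<alpha>\<in>?D. (f \<alpha> - \<iota> (c \<alpha>)) * xpow n x \<alpha>)"
  have r: "r \<in> Mpow n x (Suc N)"
    unfolding r_def
  proof (rule Mpow_sum)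
    fix \<alpha> assume "\<alpha> \<in> ?D"
    from Mpow_mult_Mpow[OF ev0_residue Mpow_monomial[OF this, of 1]]
    show "(f \<alpha> - \<iota> (c \<alpha>)) * xpow n x \<alpha> \<in> Mpow n x (Suc N)" by (simp add: c_def)
  qed
  have p: "p = (\<Sum>\<alpha>\<in>?D. \<iota> (c \<alpha>) * xpow n x \<alpha>) + r"
    unfolding pf r_def by (simp add: sum.distrib[symmetric] algebra_simps)
  have c0: "c \<gamma> = 0" if \<gamma>: "\<gamma> \<in> ?D" for \<gamma>
  proof -
    let ?d = "dpow \<iota> n x (int \<circ> \<gamma>)"
    let ?C = "\<Prod>t<n. falling (\<gamma> t) (\<gamma> t)"
    have "(\<Sum>\<alpha>\<in>?D. ?d (\<iota> (c \<alpha>) * xpow n x \<alpha>)) = (\<Sum>\<alpha>\<in>?D. if \<alpha> = \<gamma> then \<iota> (c \<gamma>) * of_nat ?C else 0)"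
      by (rule sum.cong) (auto simp: k_linear_scale[OF dpow_k_linear] dpow_xpow_same dpow_xpow_other[OF _ \<gamma>])
    also have "\<dots> = \<iota> (c \<gamma> * of_nat ?C)" using \<gamma> finite_monomials_deg
      by (simp add: iota_mult iota_of_nat del: of_nat_prod)
    finally have main: "(\<Sum>\<alpha>\<in>?D. ?d (\<iota> (c \<alpha>) * xpow n x \<alpha>)) = \<iota> (c \<gamma> * of_nat ?C)" .
    have "(\<Sum>t<n. nat ((int \<circ> \<gamma>) t)) = N" using \<gamma> by (simp add: monomials_deg_def)
    hence rest: "?d r \<in> Mideal n x" using dpow_Mpow[OF r, of "int \<circ> \<gamma>"] by simp
    have "?d p = \<iota> (c \<gamma> * of_nat ?C) + ?d r"
      unfolding p by (simp add: k_linear_add[OF dpow_k_linear] k_linear_sum[OF dpow_k_linear] main)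
    hence "ev0 \<iota> n x (?d p) = c \<gamma> * of_nat ?C" using rest by (intro ev0_eq) simp
    moreover have "ev0 \<iota> n x (?d p) = 0" using \<gamma> vanish by (simp add: monomials_deg_def)
    moreover have "?C \<noteq> 0" by (simp add: falling_nonzero)
    ultimately show ?thesis by (metis mult_eq_0_iff of_nat_eq_0_iff)
  qed
  have "(\<Sum>\<alpha>\<in>?D. \<iota> (c \<alpha>) * xpow n x \<alpha>) = 0"
    by (rule sum.neutral) (simp add: c0 iota_0)
  with p r show ?case by simp
qed

end

section \<open>Supports of the operator rings\<close>

lemma slice_at_zero: "slice t a c (e(t := 0)) = c (e(t := a))"
  by (simp add: slice_def)

lemma hatD_lev_imp_hatE_lev: "hatD_lev n x m l c \<Longrightarrow> hatE_lev n x m l c"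
  by (induction l arbitrary: c) force+

lemma hatD_lev_support:
  "hatD_lev n x m l c \<Longrightarrow> c e \<noteq> 0 \<Longrightarrow> (\<forall>i<m+l. 0 \<le> e i) \<and> (\<forall>i\<ge>m+l. e i = 0)"
proof (induction l arbitrary: c e)
  case 0 then show ?case by (simp add: hatD_def)
next
  case (Suc l)
  have "hatD_lev n x m l (slice (m + l) (e (m + l)) c)" using Suc.prems(1) by simp
  moreover have "slice (m + l) (e (m + l)) c (e(m + l := 0)) \<noteq> 0"
    using Suc.prems(2) by (simp add: slice_at_zero)
  ultimately have lower: "\<forall>i<m+l. 0 \<le> (e(m + l := 0)) i" using Suc.IH by blast
  have "0 \<le> e (m + l)" "\<forall>i\<ge>m + Suc l. e i = 0" using Suc.prems by auto
  with lower show ?case by (auto simp: less_Suc_eq)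
qed

lemma hatE_lev_nonneg_imp_hatD_lev:
  "hatE_lev n x m l c \<Longrightarrow> (\<forall>e. c e \<noteq> 0 \<longrightarrow> (\<forall>i<m+l. 0 \<le> e i)) \<Longrightarrow> hatD_lev n x m l c"
proof (induction l arbitrary: c)
  case 0 then show ?case by simp
next
  case (Suc l)
  from Suc.prems(1) obtain B where B: "\<forall>e. c e \<noteq> 0 \<longrightarrow> e (m + l) \<le> B" by auto
  have "hatD_lev n x m l (slice (m + l) a c)" for a
  proof (rule Suc.IH)
    show "hatE_lev n x m l (slice (m + l) a c)" using Suc.prems(1) by simp
    show "\<forall>e. slice (m + l) a c e \<noteq> 0 \<longrightarrow> (\<forall>i<m + l. 0 \<le> e i)"
    proof (intro allI impI)
      fix e i assume "slice (m + l) a c e \<noteq> 0" and i: "i < m + l"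
      hence "c (e(m + l := a)) \<noteq> 0" by (auto simp: slice_def split: if_splits)
      hence "\<forall>i<m + Suc l. 0 \<le> (e(m + l := a)) i" using Suc.prems(2) by blast
      thus "0 \<le> e i" using i by (auto dest: spec[of _ i])
    qed
  qed
  moreover have "\<forall>e. c e \<noteq> 0 \<longrightarrow> 0 \<le> e (m + l) \<and> e (m + l) \<le> B"
    using B Suc.prems(2) by auto
  ultimately show ?case using Suc.prems(1) by auto
qed

text \<open>The coefficients of an element of hatD_lev l tend to 0 M-adically: only finitely many
  lie outside M^N (the slices are finitely many and each has this property).\<close>
lemma hatD_lev_coeffs_small: "hatD_lev n x m l c \<Longrightarrow> finite {e. c e \<notin> Mpow n x N}"
proof (induction l arbitrary: c)
  case 0 then show ?case by (simp add: hatD_def)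
next
  case (Suc l)
  from Suc.prems obtain B where B: "\<forall>e. c e \<noteq> 0 \<longrightarrow> 0 \<le> e (m + l) \<and> e (m + l) \<le> B" by auto
  let ?S = "\<Union>a\<in>{0..B}. (\<lambda>e. e(m + l := a)) ` {e. slice (m + l) a c e \<notin> Mpow n x N}"
  have "{e. c e \<notin> Mpow n x N} \<subseteq> ?S"
  proof
    fix e assume "e \<in> {e. c e \<notin> Mpow n x N}"
    hence ce: "c e \<notin> Mpow n x N" by simp
    hence "e (m + l) \<in> {0..B}" using B Mpow_zero by (metis atLeastAtMost_iff)
    moreover have "slice (m + l) (e (m + l)) c (e(m + l := 0)) \<notin> Mpow n x N"
      using ce by (simp add: slice_at_zero)
    moreover have "e = (e(m + l := 0))(m + l := e (m + l))" by simp
    ultimately show "e \<in> ?S" by blast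
  qed
  moreover have "finite ?S"
    using Suc.prems by (intro finite_UN_I finite_atLeastAtMost_int finite_imageI Suc.IH) simp_all
  ultimately show ?case by (rule finite_subset)
qed

section \<open>The action of hatE on W_0\<close>

context coordinate_setting
begin

text \<open>A nonzero coefficient of w.A at z^(-s) comes from a Leibniz term with a coefficient
  A_(s-j+l) that is not in M^(|l|+1), since d^l maps M^(|l|+1) into M.\<close>
lemma act_nonzero_witness:
  assumes "act \<iota> n x w A s \<noteq> 0"
  obtains j l where "w j \<noteq> 0" "l \<in> lower_box j"
    "A (\<lambda>t. s t - j t + l t) \<notin> Mpow n x ((\<Sum>t<n. nat (l t)) + 1)"
proof -
  from assms obtain j where j: "w j \<noteq> 0" and
    "w j * (\<Sum>l\<in>lower_box j. (\<Prod>t<n. of_nat (nat (j t) choose nat (l t))) *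
           ev0 \<iota> n x (dpow \<iota> n x l (A (\<lambda>t. s t - j t + l t)))) \<noteq> 0"
    unfolding act_def by (auto elim: sum.not_neutral_contains_not_neutral)
  then obtain l where l: "l \<in> lower_box j"
    and ev: "ev0 \<iota> n x (dpow \<iota> n x l (A (\<lambda>t. s t - j t + l t))) \<noteq> 0"
    by (auto elim: sum.not_neutral_contains_not_neutral)
  have "A (\<lambda>t. s t - j t + l t) \<notin> Mpow n x ((\<Sum>t<n. nat (l t)) + 1)"
  proof
    assume "A (\<lambda>t. s t - j t + l t) \<in> Mpow n x ((\<Sum>t<n. nat (l t)) + 1)"
    hence "dpow \<iota> n x l (A (\<lambda>t. s t - j t + l t)) \<in> Mideal n x" using dpow_Mpow[of _ _ l] by fastforce
    with ev ev0_Mideal show False by blast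
  qed
  with j l show thesis by (rule that)
qed

lemma hatDmn_preserves_W0:
  assumes D: "hatDmn n x m A" and mn: "m \<le> n" and w: "w \<in> W0 n"
  shows "act \<iota> n x w A \<in> W0 n"
proof -
  have Dl: "hatD_lev n x m (n - m) A" using D by (simp add: hatDmn_def)
  have A_supp: "A e \<noteq> 0 \<Longrightarrow> (\<forall>t<n. 0 \<le> e t) \<and> (\<forall>t\<ge>n. e t = 0)" for e
    using hatD_lev_support[OF Dl, of e] mn by simp
  have w_fin: "finite {j. w j \<noteq> 0}"
    and w_supp: "\<And>j. w j \<noteq> 0 \<Longrightarrow> (\<forall>t<n. 0 \<le> j t) \<and> (\<forall>t\<ge>n. j t = 0)"
    using w by (auto simp: W0_def)
  text \<open>All exponents s with a nonzero coefficient lie in this finite set.\<close>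
  let ?S = "\<Union>j\<in>{j. w j \<noteq> 0}. \<Union>l\<in>lower_box j.
     (\<lambda>i t. i t + j t - l t) ` {i. A i \<notin> Mpow n x ((\<Sum>t<n. nat (l t)) + 1)}"
  have supp: "s \<in> ?S \<and> (\<forall>t<n. 0 \<le> s t) \<and> (\<forall>t\<ge>n. s t = 0)" if nz: "act \<iota> n x w A s \<noteq> 0" for s
  proof -
    obtain j l where j: "w j \<noteq> 0" and l: "l \<in> lower_box j"
      and notM: "A (\<lambda>t. s t - j t + l t) \<notin> Mpow n x ((\<Sum>t<n. nat (l t)) + 1)"
      using act_nonzero_witness[OF nz] by blast
    define i where "i = (\<lambda>t. s t - j t + l t)"
    have s: "s = (\<lambda>t. i t + j t - l t)" by (simp add: i_def)
    have "s \<in> (\<lambda>i t. i t + j t - l t) ` {i. A i \<notin> Mpow n x ((\<Sum>t<n. nat (l t)) + 1)}"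
      using notM by (intro image_eqI[of _ _ i]) (simp_all add: i_def)
    hence "s \<in> ?S" using j l by (intro UN_I[of j] UN_I[of l]) simp_all
    moreover have "(\<forall>t<n. 0 \<le> s t) \<and> (\<forall>t\<ge>n. s t = 0)"
    proof -
      have "A i \<noteq> 0" using notM Mpow_zero[of n x] unfolding i_def by metis
      hence i_supp: "(\<forall>t<n. 0 \<le> i t) \<and> (\<forall>t\<ge>n. i t = 0)" by (rule A_supp)
      have l_bounds: "0 \<le> l t" "l t \<le> j t" for t using l by simp_all
      show ?thesis using i_supp w_supp[OF j] l_bounds unfolding s by (smt (verit))
    qed
    ultimately show ?thesis by blast
  qed
  have "finite ?S"
    using w_fin w_supp hatD_lev_coeffs_small[OF Dl] finite_lower_box
    by (intro finite_UN_I finite_imageI) blast+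
  moreover have "{s. act \<iota> n x w A s \<noteq> 0} \<subseteq> ?S" using supp by blast
  ultimately have "finite {s. act \<iota> n x w A s \<noteq> 0}" by (rule finite_subset[rotated])
  with supp show ?thesis unfolding W0_def by blast
qed

definition zmono :: "(nat \<Rightarrow> nat) \<Rightarrow> (nat \<Rightarrow> int) \<Rightarrow> 'k" where
  "zmono j = (\<lambda>e. if e = int \<circ> j then 1 else 0)"

lemma zmono_W0: "\<forall>i\<ge>n. j i = 0 \<Longrightarrow> zmono j \<in> W0 n"
  by (auto simp: W0_def zmono_def)

lemma lower_box_smaller:
  assumes j: "\<forall>i\<ge>n. j i = 0" and l: "l \<in> lower_box (int \<circ> j) - {int \<circ> j}"
  obtains \<gamma> where "l = int \<circ> \<gamma>" "\<forall>i\<ge>n. \<gamma> i = 0" "sum \<gamma> {..<n} < sum j {..<n}"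
proof
  define \<gamma> where "\<gamma> = nat \<circ> l"
  show lg: "l = int \<circ> \<gamma>" using l by (auto simp: \<gamma>_def fun_eq_iff)
  have le: "\<gamma> t \<le> j t" for t
    using l by (simp add: \<gamma>_def nat_le_iff)
  thus zero: "\<forall>i\<ge>n. \<gamma> i = 0" using j by (metis le_zero_eq)
  obtain t where t: "\<gamma> t \<noteq> j t" using l lg by fastforce
  hence "t < n" using zero j by (metis not_le)
  with le t show "sum \<gamma> {..<n} < sum j {..<n}"
    by (intro sum_strict_mono_ex1) (auto intro!: bexI[of _ t] simp: order.strict_iff_order)
qed

text \<open>If W_0 A is in W_0 and s has a negative entry, then every derivative d^j A_s vanishes
  at 0.  Induction on |j|: the coefficient of z^(-s) in z^(-j).A is zero, and in its Leibniz
  expansion all terms with l < j vanish by induction, leaving ev0 (d^j A_s).\<close>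
lemma negative_exponent_derivatives_vanish:
  assumes W: "\<forall>w\<in>W0 n. act \<iota> n x w A \<in> W0 n"
    and j: "\<forall>i\<ge>n. j i = 0" and s: "\<exists>t<n. s t < 0"
  shows "ev0 \<iota> n x (dpow \<iota> n x (int \<circ> j) (A s)) = 0"
  using j s
proof (induction "sum j {..<n}" arbitrary: j s rule: less_induct)
  case less
  obtain t0 where t0: "t0 < n" "s t0 < 0" using less.prems(2) by blast
  let ?L = "lower_box (int \<circ> j)"
  let ?g = "\<lambda>l. (\<Prod>t<n. of_nat (nat ((int \<circ> j) t) choose nat (l t))) *
     ev0 \<iota> n x (dpow \<iota> n x l (A (\<lambda>t. s t - (int \<circ> j) t + l t)))"
  have "act \<iota> n x (zmono j) A \<in> W0 n" using W zmono_W0[OF less.prems(1)] by blast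
  hence "act \<iota> n x (zmono j) A s = 0" using t0 unfolding W0_def by force
  moreover have "act \<iota> n x (zmono j) A s = sum ?g ?L"
    unfolding act_def zmono_def by (simp add: Collect_conv_if)
  moreover have "sum ?g ?L = ?g (int \<circ> j) + sum ?g (?L - {int \<circ> j})"
    using finite_lower_box less.prems(1) by (intro sum.remove) auto
  moreover have "sum ?g (?L - {int \<circ> j}) = 0"
  proof (rule sum.neutral, rule ballI)
    fix l assume l: "l \<in> ?L - {int \<circ> j}"
    then obtain \<gamma> where \<gamma>: "l = int \<circ> \<gamma>" "\<forall>i\<ge>n. \<gamma> i = 0" "sum \<gamma> {..<n} < sum j {..<n}"
      using lower_box_smaller[OF less.prems(1)] by blast
    have "l t0 \<le> int (j t0)" using l by simp
    hence "\<exists>t<n. s t - (int \<circ> j) t + l t < 0" using t0 by (intro exI[of _ t0]) simp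
    with \<gamma> less.hyps show "?g l = 0" by simp
  qed
  ultimately show ?case by simp
qed

text \<open>Second inclusion: an element of hatE_(m,n-m) preserving W_0 lies in hatD_(m,n-m).
  Its coefficients at exponents with a negative entry lie in every M^N, hence vanish.\<close>
lemma W0_preserving_imp_hatDmn:
  assumes sep: "(\<Inter>N. Mpow n x N) = {0}" and E: "hatE n x m A" and mn: "m \<le> n"
    and W: "\<forall>w\<in>W0 n. act \<iota> n x w A \<in> W0 n"
  shows "hatDmn n x m A"
proof -
  have A_zero: "A s = 0" if "\<exists>t<n. s t < 0" for s
  proof -
    have "A s \<in> Mpow n x N" for N
      using negative_exponent_derivatives_vanish[OF W _ that] by (rule taylor_vanishing)
    thus ?thesis using sep by blast
  qed
  have "\<forall>e. A e \<noteq> 0 \<longrightarrow> (\<forall>i<m + (n - m). 0 \<le> e i)"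
    using A_zero mn by (metis le_add_diff_inverse not_le)
  with E show ?thesis
    by (simp add: hatDmn_def hatE_def hatE_lev_nonneg_imp_hatD_lev)
qed

end

theorem proposition2:
  fixes \<iota> :: "'k::field_char_0 \<Rightarrow> 'r::comm_ring_1"
    and n m :: nat
    and x :: "nat \<Rightarrow> 'r"
  assumes "k_algebra_hom \<iota>"
    and "coord_system \<iota> n x"
    and "residue_field_k \<iota> n x"
    and "M_adically_complete n x"
    and "1 \<le> m" and "m \<le> n"
  shows "{A. hatDmn n x m A} = {A. hatE n x m A \<and> (\<forall>w\<in>W0 n. act \<iota> n x w A \<in> W0 n)}"
proof -
  interpret coordinate_setting \<iota> n x using assms(1-3) by unfold_locales
  have separated: "(\<Inter>N. Mpow n x N) = {0}"
    using assms(4) by (simp add: M_adically_complete_def)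
  have "hatDmn n x m A \<Longrightarrow> hatE n x m A" for A
    by (simp add: hatDmn_def hatE_def hatD_lev_imp_hatE_lev)
  with hatDmn_preserves_W0[OF _ assms(6)] W0_preserving_imp_hatDmn[OF separated _ assms(6)]
  show ?thesis by blast
qed

end
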